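(* For all integers $k\ge 2$ and $n>1$, \[\mathcal{L}_n^k\simeq\bigvee_{1\le i<\min(k,n)}\mathrm{susp}\left(\mathcal{L}^k_{n-k-i}\right).\]
   Context: For $n\ge1$, $\mathcal{L}_n^k$ is the independence complex of the graph with vertex set $\{1,2,\dots,n\}$ in which two vertices $i<j$ are adjacent iff $j-i<k$ (the independence complex has the independent sets as simplices). For $n\le 0$, $\mathcal{L}_n^k=\emptyset$ (the empty complex), and $\mathrm{susp}(\emptyset)=S^0$. *)

theory Defs
  imports "HOL-Analysis.Analysis"
begin

text \<open>Abstract simplicial complexes on vertex set nat, given as sets of simplices
  (finite vertex sets, including the empty simplex).\<close>

text \<open>L_n^k: independence complex of the graph on {1..n} where i<j adjacent iff j-i<k.
  For n \<le> 0 the vertex set is empty and the complex is the empty complex {{}}.\<close>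
definition indep_L :: "nat \<Rightarrow> int \<Rightarrow> nat set set" where
  "indep_L k n = {\<sigma>. \<sigma> \<subseteq> {1..nat n} \<and> (\<forall>i\<in>\<sigma>. \<forall>j\<in>\<sigma>. i < j \<longrightarrow> k \<le> j - i)}"

text \<open>Suspension: join with S^0 (two new vertices 0 and 1; old vertices shifted by 2).\<close>
definition susp :: "nat set set \<Rightarrow> nat set set" where
  "susp K = {(\<lambda>v. v + 2) ` \<sigma> \<union> \<tau> | \<sigma> \<tau>. \<sigma> \<in> K \<and> \<tau> \<in> {{}, {0}, {1}}}"

text \<open>Wedge of complexes K i (i \<in> I), each based at vertex 0: disjoint copies glued at vertex 0.\<close>
definition wedge_enc :: "nat \<Rightarrow> nat \<Rightarrow> nat" where
  "wedge_enc i v = (if v = 0 then 0 else Suc (prod_encode (i, v)))"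

definition wedge :: "nat set \<Rightarrow> (nat \<Rightarrow> nat set set) \<Rightarrow> nat set set" where
  "wedge I K = (\<Union>i\<in>I. (\<lambda>\<sigma>. wedge_enc i ` \<sigma>) ` K i)"

text \<open>Geometric realization: barycentric-coordinate functions supported on a simplex,
  with the (product) topology of nat \<Rightarrow> real.\<close>
definition realization :: "nat set set \<Rightarrow> (nat \<Rightarrow> real) set" where
  "realization K = {f. (\<forall>v. 0 \<le> f v) \<and> finite {v. f v \<noteq> 0} \<and>
       sum f {v. f v \<noteq> 0} = 1 \<and> {v. f v \<noteq> 0} \<in> K}"

end

theory Submission
  imports Defs
begin

(* Every simplex of L_n^k contains at most one of the pairwise adjacent vertices 1, ..., min k n,
   and its other vertices lie at distance at least k from that one. Hence L_n^k is the cone with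
   apex 1 over the subcomplex A of simplices avoiding {1..k}, together with, for 1 <= i < min k n,
   the cone with apex i + 1 over the copy v |-> v + i + k of L^k_{n-k-i}, a subcomplex of A.
   Collapsing the contractible cone with apex 1 to a point turns each of the other cones into a
   suspension, all of them glued at that point. The collapse is written down explicitly; its
   homotopy inverse is the simplicial map back, and both composites are homotopic to the identity
   by straight-line homotopies once the lower halves of the apex cones have been pushed onto their
   bases by a radial stretch. *)

section \<open>Simplicial complexes and their realizations\<close>

definition supp :: "(nat \<Rightarrow> real) \<Rightarrow> nat set" where
  "supp f = {v. f v \<noteq> 0}"

definition downward_closed :: "nat set set \<Rightarrow> bool" where
  "downward_closed K \<longleftrightarrow> (\<forall>\<sigma>\<in>K. \<forall>\<tau>. \<tau> \<subseteq> \<sigma> \<longrightarrow> \<tau> \<in> K)"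

lemma downward_closedD: "downward_closed K \<Longrightarrow> \<sigma> \<in> K \<Longrightarrow> \<tau> \<subseteq> \<sigma> \<Longrightarrow> \<tau> \<in> K"
  unfolding downward_closed_def by blast

lemma downward_closed_Un:
  "downward_closed K \<Longrightarrow> downward_closed L \<Longrightarrow> downward_closed (K \<union> L)"
  unfolding downward_closed_def by blast

lemma downward_closed_UN:
  "(\<And>i. i \<in> I \<Longrightarrow> downward_closed (K i)) \<Longrightarrow> downward_closed (\<Union>i\<in>I. K i)"
  unfolding downward_closed_def by blast

lemma downward_closed_image:
  assumes "downward_closed K"
  shows "downward_closed ((`) f ` K)"
  unfolding downward_closed_def
proof (intro ballI allI impI)
  fix \<sigma> \<tau> assume "\<sigma> \<in> (`) f ` K" "\<tau> \<subseteq> \<sigma>"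
  then obtain \<rho> where "\<rho> \<in> K" "\<sigma> = f ` \<rho>" by blast
  then have "{v \<in> \<rho>. f v \<in> \<tau>} \<in> K" and "\<tau> = f ` {v \<in> \<rho>. f v \<in> \<tau>}"
    using downward_closedD[OF assms] \<open>\<tau> \<subseteq> \<sigma>\<close> by auto
  then show "\<tau> \<in> (`) f ` K" by blast
qed

lemma downward_closed_susp:
  assumes "downward_closed K"
  shows "downward_closed (susp K)"
  unfolding downward_closed_def susp_def
proof (intro ballI allI impI)
  fix \<sigma> \<tau> assume "\<sigma> \<in> {(\<lambda>v. v + 2) ` \<rho> \<union> t | \<rho> t. \<rho> \<in> K \<and> t \<in> {{}, {0}, {1}}}" "\<tau> \<subseteq> \<sigma>"
  then obtain \<rho> t where \<rho>: "\<rho> \<in> K" "t \<in> {{}, {0}, {1}}" "\<tau> \<subseteq> (\<lambda>v. v + 2) ` \<rho> \<union> t" by blast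
  have "{v \<in> \<rho>. v + 2 \<in> \<tau>} \<in> K" by (rule downward_closedD[OF assms \<rho>(1)]) auto
  moreover have "\<tau> \<inter> t \<in> {{}, {0}, {1}}"
  proof -
    have "\<tau> \<inter> t \<subseteq> t" by blast
    then show ?thesis using \<rho>(2) by (auto simp: subset_singleton_iff)
  qed
  moreover have "\<tau> = (\<lambda>v. v + 2) ` {v \<in> \<rho>. v + 2 \<in> \<tau>} \<union> \<tau> \<inter> t" using \<rho>(3) by auto
  ultimately show "\<tau> \<in> {(\<lambda>v. v + 2) ` \<rho> \<union> t | \<rho> t. \<rho> \<in> K \<and> t \<in> {{}, {0}, {1}}}"
    by (intro CollectI exI conjI)
qed

lemma downward_closed_wedge:
  "(\<And>i. i \<in> I \<Longrightarrow> downward_closed (K i)) \<Longrightarrow> downward_closed (wedge I K)"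
  unfolding wedge_def by (rule downward_closed_UN, rule downward_closed_image)

lemma mem_realization_iff:
  "f \<in> realization K \<longleftrightarrow> (\<forall>v. 0 \<le> f v) \<and> finite (supp f) \<and> sum f (supp f) = 1 \<and> supp f \<in> K"
  by (simp add: realization_def supp_def)

lemma sum_supp_eq: "finite W \<Longrightarrow> supp f \<subseteq> W \<Longrightarrow> sum f (supp f) = sum f W"
  by (rule sum.mono_neutral_left) (auto simp: supp_def)

lemma supp_indicator [simp]: "supp (indicator {v}) = {v}"
  by (auto simp: supp_def indicator_def)

lemma indicator_in_realization: "{v} \<in> K \<Longrightarrow> indicator {v} \<in> realization K"
  by (simp add: mem_realization_iff)

lemma continuous_on_coordinate: "continuous_on S (\<lambda>x. x v)"
  by (rule continuous_on_subset[OF continuous_on_product_coordinates]) auto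

lemma convex_comb_in_realization:
  assumes K: "downward_closed K" and f: "f \<in> realization K" and g: "g \<in> realization K"
    and joint: "supp f \<union> supp g \<in> K" and t: "t \<in> {0..1}"
  shows "(\<lambda>v. (1 - t) * f v + t * g v) \<in> realization K"
proof -
  let ?h = "\<lambda>v. (1 - t) * f v + t * g v" and ?W = "supp f \<union> supp g"
  have W: "finite ?W" using f g by (auto simp: mem_realization_iff)
  have sub: "supp ?h \<subseteq> ?W" by (auto simp: supp_def)
  have "sum ?h (supp ?h) = sum ?h ?W" by (rule sum_supp_eq[OF W sub])
  also have "\<dots> = (1 - t) * sum f ?W + t * sum g ?W"
    by (simp add: sum.distrib sum_distrib_left)
  also have "sum f ?W = 1" using f W sum_supp_eq[of ?W f] by (auto simp: mem_realization_iff)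
  also have "sum g ?W = 1" using g W sum_supp_eq[of ?W g] by (auto simp: mem_realization_iff)
  finally have "sum ?h (supp ?h) = 1" by simp
  moreover have "supp ?h \<in> K" by (rule downward_closedD[OF K joint sub])
  moreover have "0 \<le> ?h v" for v using f g t by (auto simp: mem_realization_iff)
  ultimately show ?thesis using finite_subset[OF sub W] by (auto simp: mem_realization_iff)
qed

lemma homotopic_in_realization_if_joint_supp:
  fixes S :: "'a::topological_space set"
  assumes K: "downward_closed K"
    and f: "continuous_on S f" "f ` S \<subseteq> realization K"
    and g: "continuous_on S g" "g ` S \<subseteq> realization K"
    and joint: "\<And>x. x \<in> S \<Longrightarrow> supp (f x) \<union> supp (g x) \<in> K"
  shows "homotopic_with_canon (\<lambda>h. True) S (realization K) f g"
proof -
  define h where "h = (\<lambda>y::real \<times> 'a. \<lambda>v. (1 - fst y) * f (snd y) v + fst y * g (snd y) v)"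
  have "continuous_on ({0..1} \<times> S) h"
    unfolding h_def
  proof (intro continuous_on_coordinatewise_then_product continuous_intros)
    fix v
    show "continuous_on ({0..1} \<times> S) (\<lambda>y. f (snd y) v)"
      by (rule continuous_on_product_then_coordinatewise[of _ "\<lambda>y. f (snd y)"])
         (rule continuous_on_compose2[OF f(1) continuous_on_snd]; auto)
    show "continuous_on ({0..1} \<times> S) (\<lambda>y. g (snd y) v)"
      by (rule continuous_on_product_then_coordinatewise[of _ "\<lambda>y. g (snd y)"])
         (rule continuous_on_compose2[OF g(1) continuous_on_snd]; auto)
  qed
  moreover have "h ` ({0..1} \<times> S) \<subseteq> realization K"
    using f(2) g(2) joint by (auto simp: h_def intro!: convex_comb_in_realization[OF K])
  ultimately have "continuous_map (prod_topology (top_of_set {0..1}) (top_of_set S))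
      (top_of_set (realization K)) h"
    by (auto simp: continuous_map_in_subtopology)
  then show ?thesis unfolding homotopic_with_def
    by (intro exI[of _ h]) (simp add: h_def)
qed

text \<open>\<open>W\<close> is a finite set containing the supports of all points considered; it makes the affine
  extension of the vertex map \<open>\<phi>\<close> a finite sum of coordinates and hence continuous.\<close>

definition realize_map :: "(nat \<Rightarrow> nat) \<Rightarrow> nat set \<Rightarrow> (nat \<Rightarrow> real) \<Rightarrow> nat \<Rightarrow> real" where
  "realize_map \<phi> W z u = (\<Sum>w | w \<in> W \<and> \<phi> w = u. z w)"

lemma continuous_on_realize_map: "finite W \<Longrightarrow> continuous_on S (realize_map \<phi> W)"
  unfolding realize_map_def
  by (intro continuous_on_coordinatewise_then_product continuous_on_sum continuous_on_coordinate)

lemma realize_map_eq_sum_supp: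
  assumes "finite W" "supp z \<subseteq> W"
  shows "realize_map \<phi> W z u = (\<Sum>w | w \<in> supp z \<and> \<phi> w = u. z w)"
  unfolding realize_map_def
  by (rule sum.mono_neutral_right) (use assms in \<open>auto simp: supp_def\<close>)

lemma supp_realize_map:
  assumes W: "finite W" "supp z \<subseteq> W" and z: "z \<in> realization K"
  shows "supp (realize_map \<phi> W z) = \<phi> ` supp z"
proof (intro set_eqI iffI)
  fix u assume "u \<in> supp (realize_map \<phi> W z)"
  then have "(\<Sum>w | w \<in> supp z \<and> \<phi> w = u. z w) \<noteq> 0"
    using realize_map_eq_sum_supp[OF W] by (simp add: supp_def)
  then obtain w where "w \<in> supp z" "\<phi> w = u"
    using sum.not_neutral_contains_not_neutral by blast
  then show "u \<in> \<phi> ` supp z" by blast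
next
  fix u assume "u \<in> \<phi> ` supp z"
  then obtain w where w: "w \<in> supp z" "\<phi> w = u" by blast
  have nonneg: "\<And>v. 0 \<le> z v" and fin: "finite (supp z)" using z by (auto simp: mem_realization_iff)
  have "0 < z w" using w nonneg by (simp add: supp_def less_le)
  also have "z w \<le> (\<Sum>w | w \<in> supp z \<and> \<phi> w = u. z w)"
    by (rule member_le_sum) (use w fin nonneg in simp_all)
  also have "\<dots> = realize_map \<phi> W z u"
    by (rule realize_map_eq_sum_supp[OF W, symmetric])
  finally show "u \<in> supp (realize_map \<phi> W z)"
    unfolding supp_def by simp
qed

lemma realize_map_in_realization:
  assumes W: "finite W" "supp z \<subseteq> W" and z: "z \<in> realization K"
    and simplex: "\<phi> ` supp z \<in> L"
  shows "realize_map \<phi> W z \<in> realization L"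
proof -
  have fin: "finite (supp z)" and "sum z (supp z) = 1" and "\<And>v. 0 \<le> z v"
    using z by (auto simp: mem_realization_iff)
  have "sum (realize_map \<phi> W z) (supp (realize_map \<phi> W z))
      = (\<Sum>u\<in>\<phi> ` supp z. \<Sum>w | w \<in> supp z \<and> \<phi> w = u. z w)"
    using supp_realize_map[OF W z] realize_map_eq_sum_supp[OF W] by simp
  also have "\<dots> = sum z (supp z)"
    using sum.image_gen[OF fin, of z \<phi>] by simp
  finally have "sum (realize_map \<phi> W z) (supp (realize_map \<phi> W z)) = 1"
    using \<open>sum z (supp z) = 1\<close> by simp
  moreover have "0 \<le> realize_map \<phi> W z u" for u
    unfolding realize_map_def by (rule sum_nonneg) (use \<open>\<And>v. 0 \<le> z v\<close> in blast)
  ultimately show ?thesis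
    using supp_realize_map[OF W z] fin simplex by (simp add: mem_realization_iff)
qed

text \<open>On a simplex with a vertex \<open>a \<in> P\<close>, the points with \<open>x a \<le> 1/2\<close> are projected radially from
  \<open>a\<close> onto the opposite face and the remaining ones are stretched over the whole simplex.\<close>

definition radial_stretch :: "nat set \<Rightarrow> (nat \<Rightarrow> real) \<Rightarrow> nat \<Rightarrow> real" where
  "radial_stretch P x u =
     (if u \<in> P then max 0 (2 * x u - 1) else x u / (1 - min (\<Sum>a\<in>P. x a) (1/2)))"

lemma continuous_on_radial_stretch: "finite P \<Longrightarrow> continuous_on S (radial_stretch P)"
proof (intro continuous_on_coordinatewise_then_product)
  fix u assume "finite P"
  have coord: "continuous_on S (\<lambda>x. x v)" for v :: nat
    by (rule continuous_on_coordinate)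
  have "continuous_on S (\<lambda>x. x u / (1 - min (\<Sum>a\<in>P. x a) (1/2)))"
    by (intro continuous_intros coord) (auto simp: min_def)
  then show "continuous_on S (\<lambda>x. radial_stretch P x u)"
    unfolding radial_stretch_def by (cases "u \<in> P") (auto intro!: continuous_intros coord)
qed

lemma radial_stretch_eq_self: "(\<And>a. a \<in> P \<Longrightarrow> x a = 0) \<Longrightarrow> radial_stretch P x = x"
  by (auto simp: radial_stretch_def fun_eq_iff)

lemma supp_radial_stretch_subset: "(\<And>v. 0 \<le> x v) \<Longrightarrow> supp (radial_stretch P x) \<subseteq> supp x"
  by (auto simp: radial_stretch_def supp_def max_def)

lemma radial_stretch_eq_0: "a \<in> P \<Longrightarrow> x a \<le> 1/2 \<Longrightarrow> radial_stretch P x a = 0"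
  by (simp add: radial_stretch_def)

lemma sum_radial_stretch:
  assumes P: "finite P" and nonneg: "\<And>v. 0 \<le> x v"
    and fin: "finite (supp x)" and sum1: "sum x (supp x) = 1"
    and single: "\<And>a b. a \<in> supp x \<inter> P \<Longrightarrow> b \<in> supp x \<inter> P \<Longrightarrow> a = b"
  shows "sum (radial_stretch P x) (supp x) = 1"
proof (cases "\<forall>a\<in>P. x a = 0")
  case True
  then show ?thesis using sum1 radial_stretch_eq_self by simp
next
  case False
  then obtain a where a: "a \<in> P" "x a \<noteq> 0" by blast
  define s where "s = x a"
  have a_supp: "a \<in> supp x" using a by (simp add: supp_def)
  have others: "x b = 0" if "b \<in> P" "b \<noteq> a" for b
    using single[of a b] a_supp a(1) that by (auto simp: supp_def)
  have mass_P: "(\<Sum>b\<in>P. x b) = s"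
    unfolding s_def by (subst sum.remove[OF P a(1)]) (auto intro!: sum.neutral others)
  have "0 < s" using a nonneg by (simp add: s_def less_le)
  have rest: "sum x (supp x - {a}) = 1 - s"
    using sum1 sum.remove[OF fin a_supp, of x] by (simp add: s_def)
  then have "s \<le> 1" using sum_nonneg[of "supp x - {a}" x] nonneg by force
  have "sum (radial_stretch P x) (supp x)
      = radial_stretch P x a + sum (radial_stretch P x) (supp x - {a})"
    by (rule sum.remove[OF fin a_supp])
  also have "sum (radial_stretch P x) (supp x - {a})
      = (\<Sum>u\<in>supp x - {a}. x u / (1 - min s (1/2)))"
  proof (rule sum.cong[OF refl])
    fix u assume "u \<in> supp x - {a}"
    then have "u \<notin> P" using others by (auto simp: supp_def)
    then show "radial_stretch P x u = x u / (1 - min s (1/2))"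
      by (simp add: radial_stretch_def mass_P)
  qed
  also have "\<dots> = (1 - s) / (1 - min s (1/2))"
    by (simp add: sum_divide_distrib[symmetric] rest)
  also have "radial_stretch P x a = max 0 (2 * s - 1)"
    by (simp add: radial_stretch_def a s_def)
  finally show ?thesis
    using \<open>0 < s\<close> \<open>s \<le> 1\<close> by (cases "s \<le> 1/2") (auto simp: min_def max_def field_simps)
qed

lemma radial_stretch_in_realization:
  assumes K: "downward_closed K" and P: "finite P"
    and single: "\<And>\<sigma> a b. \<sigma> \<in> K \<Longrightarrow> a \<in> \<sigma> \<inter> P \<Longrightarrow> b \<in> \<sigma> \<inter> P \<Longrightarrow> a = b"
    and x: "x \<in> realization K"
  shows "radial_stretch P x \<in> realization K"
proof -
  have nonneg: "\<And>v. 0 \<le> x v" and fin: "finite (supp x)" and sum1: "sum x (supp x) = 1"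
    and simplex: "supp x \<in> K"
    using x by (auto simp: mem_realization_iff)
  have sub: "supp (radial_stretch P x) \<subseteq> supp x"
    using supp_radial_stretch_subset nonneg by blast
  have "sum (radial_stretch P x) (supp (radial_stretch P x)) = 1"
    using sum_supp_eq[OF fin sub] sum_radial_stretch[OF P nonneg fin sum1 single[OF simplex]] by simp
  moreover have "0 \<le> radial_stretch P x v" for v
    using nonneg by (auto simp: radial_stretch_def min_def intro!: divide_nonneg_pos)
  moreover have "supp (radial_stretch P x) \<in> K" by (rule downward_closedD[OF K simplex sub])
  ultimately show ?thesis using finite_subset[OF sub fin] by (auto simp: mem_realization_iff)
qed

text \<open>The stretch is homotopic to the identity because it never enlarges supports.\<close>

lemma homotopic_id_via_radial_stretch:
  assumes K: "downward_closed K" and P: "finite P"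
    and single: "\<And>\<sigma> a b. \<sigma> \<in> K \<Longrightarrow> a \<in> \<sigma> \<inter> P \<Longrightarrow> b \<in> \<sigma> \<inter> P \<Longrightarrow> a = b"
    and h: "continuous_on (realization K) h" "h ` realization K \<subseteq> realization K"
    and joint: "\<And>x. x \<in> realization K \<Longrightarrow> supp (radial_stretch P x) \<union> supp (h x) \<in> K"
  shows "homotopic_with_canon (\<lambda>f. True) (realization K) (realization K) h id"
proof -
  have stretch: "continuous_on (realization K) (radial_stretch P)"
    "radial_stretch P ` realization K \<subseteq> realization K"
    by (auto intro: continuous_on_radial_stretch[OF P] radial_stretch_in_realization[OF K P single])
  have "homotopic_with_canon (\<lambda>f. True) (realization K) (realization K) id (radial_stretch P)"
  proof (rule homotopic_in_realization_if_joint_supp[OF K continuous_on_id' _ stretch])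
    fix x assume "x \<in> realization K"
    then have "supp (radial_stretch P x) \<subseteq> supp x" "supp x \<in> K"
      using supp_radial_stretch_subset by (auto simp: mem_realization_iff)
    then show "supp (id x) \<union> supp (radial_stretch P x) \<in> K" by (simp add: Un_absorb2)
  qed simp
  moreover have "homotopic_with_canon (\<lambda>f. True) (realization K) (realization K) (radial_stretch P) h"
    by (rule homotopic_in_realization_if_joint_supp[OF K stretch h joint])
  ultimately show ?thesis
    by (meson homotopic_with_symD homotopic_with_trans)
qed

definition cone_complex :: "nat \<Rightarrow> nat set set \<Rightarrow> nat set set" where
  "cone_complex a K = {\<sigma> \<union> \<tau> | \<sigma> \<tau>. \<sigma> \<in> K \<and> \<tau> \<subseteq> {a}}"

lemma cone_complexI: "\<sigma> \<in> K \<Longrightarrow> \<tau> \<subseteq> {a} \<Longrightarrow> \<sigma> \<union> \<tau> \<in> cone_complex a K"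
  unfolding cone_complex_def by blast

lemma cone_complexE:
  assumes "\<sigma> \<in> cone_complex a K"
  obtains \<rho> \<tau> where "\<sigma> = \<rho> \<union> \<tau>" "\<rho> \<in> K" "\<tau> \<subseteq> {a}"
  using assms unfolding cone_complex_def by blast

lemma downward_closed_cone_complex:
  assumes K: "downward_closed K"
  shows "downward_closed (cone_complex a K)"
  unfolding downward_closed_def
proof (intro ballI allI impI)
  fix \<sigma> \<tau> assume "\<sigma> \<in> cone_complex a K" "\<tau> \<subseteq> \<sigma>"
  then obtain \<rho> t where \<rho>: "\<sigma> = \<rho> \<union> t" "\<rho> \<in> K" "t \<subseteq> {a}" by (auto elim: cone_complexE)
  have "\<tau> \<inter> \<rho> \<in> K" by (rule downward_closedD[OF K \<rho>(2)]) blast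
  moreover have "\<tau> \<inter> t \<subseteq> {a}" using \<rho>(3) by blast
  moreover have "\<tau> = (\<tau> \<inter> \<rho>) \<union> (\<tau> \<inter> t)" using \<rho>(1) \<open>\<tau> \<subseteq> \<sigma>\<close> by blast
  ultimately show "\<tau> \<in> cone_complex a K" by (metis cone_complexI)
qed

lemma wedge_enc_0 [simp]: "wedge_enc i 0 = 0"
  by (simp add: wedge_enc_def)

lemma wedge_enc_eq_0_iff [simp]: "wedge_enc i v = 0 \<longleftrightarrow> v = 0" "0 = wedge_enc i v \<longleftrightarrow> v = 0"
  by (auto simp: wedge_enc_def)

lemma wedge_enc_eq_iff:
  "wedge_enc i v = wedge_enc j w \<longleftrightarrow> (v = 0 \<and> w = 0) \<or> (v \<noteq> 0 \<and> i = j \<and> v = w)"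
  by (auto simp: wedge_enc_def prod_encode_eq)

lemma mem_wedge_susp_iff:
  "\<sigma> \<in> wedge I (\<lambda>i. susp (K i)) \<longleftrightarrow>
    (\<exists>i\<in>I. \<exists>\<rho>\<in>K i. \<exists>\<tau>\<in>{{}, {0}, {1}}. \<sigma> = wedge_enc i ` ((\<lambda>v. v + 2) ` \<rho> \<union> \<tau>))"
  unfolding wedge_def susp_def by blast

section \<open>Collapsing cones onto a wedge of suspensions\<close>

lemma wedge_code_cases:
  obtains (base) "w = 0" | (enc) i v where "v \<noteq> 0" "w = wedge_enc i v"
  | (junk) i where "w = Suc (prod_encode (i, 0))"
proof -
  obtain i v where "prod_decode (w - 1) = (i, v)" by (cases "prod_decode (w - 1)")
  then have "w \<noteq> 0 \<Longrightarrow> w = Suc (prod_encode (i, v))" by (metis Suc_pred' gr0I prod_decode_inverse)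
  then show ?thesis using that by (cases "w = 0"; cases "v = 0") (auto simp: wedge_enc_def)
qed

locale coned_subcomplexes =
  fixes I :: "nat set" and A :: "nat set set" and B :: "nat \<Rightarrow> nat set set"
    and q :: nat and p :: "nat \<Rightarrow> nat" and sh :: "nat \<Rightarrow> nat \<Rightarrow> nat"
  assumes finite_I: "finite I" and I_nonempty: "I \<noteq> {}"
    and A_closed: "downward_closed A"
    and B_closed: "i \<in> I \<Longrightarrow> downward_closed (B i)"
    and empty_in_B: "i \<in> I \<Longrightarrow> {} \<in> B i"
    and finite_B_vertices: "i \<in> I \<Longrightarrow> finite (\<Union>(B i))"
    and sh_in_A: "i \<in> I \<Longrightarrow> \<beta> \<in> B i \<Longrightarrow> sh i ` \<beta> \<in> A"
    and inj_sh: "i \<in> I \<Longrightarrow> inj (sh i)"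
    and p_notin_A: "i \<in> I \<Longrightarrow> p i \<notin> \<Union>A"
    and p_neq_q: "i \<in> I \<Longrightarrow> p i \<noteq> q"
    and inj_p: "inj_on p I"
    and sh_neq_p: "i \<in> I \<Longrightarrow> j \<in> I \<Longrightarrow> sh i v \<noteq> p j"
begin

definition L :: "nat set set" where
  "L = cone_complex q A \<union> (\<Union>i\<in>I. cone_complex (p i) ((`) (sh i) ` B i))"

definition R :: "nat set set" where
  "R = wedge I (\<lambda>i. susp (B i))"

text \<open>Vertices of \<open>R\<close>: 0 is the wedge point, \<open>north i\<close> the other suspension vertex of
  the \<open>i\<close>-th summand, and \<open>lift i \<beta>\<close> the copy of \<open>\<beta> \<in> B i\<close> in that summand.\<close>

abbreviation north :: "nat \<Rightarrow> nat" where
  "north i \<equiv> wedge_enc i 1"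

abbreviation lift :: "nat \<Rightarrow> nat set \<Rightarrow> nat set" where
  "lift i \<beta> \<equiv> (\<lambda>v. wedge_enc i (v + 2)) ` \<beta>"

lemma mem_R_iff:
  "\<sigma> \<in> R \<longleftrightarrow> (\<exists>i\<in>I. \<exists>\<beta>\<in>B i. \<exists>\<tau>\<in>{{}, {0}, {1}}. \<sigma> = wedge_enc i ` ((\<lambda>v. v + 2) ` \<beta> \<union> \<tau>))"
  unfolding R_def by (rule mem_wedge_susp_iff)

lemma lift_insert: "wedge_enc i ` ((\<lambda>v. v + 2) ` \<beta> \<union> {u}) = insert (wedge_enc i u) (lift i \<beta>)"
  by (auto simp: image_image)

lemma R_cases:
  assumes "\<sigma> \<in> R"
  obtains (lower) i \<beta> where "i \<in> I" "\<beta> \<in> B i" "\<sigma> = lift i \<beta> \<or> \<sigma> = insert 0 (lift i \<beta>)"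
  | (upper) i \<beta> where "i \<in> I" "\<beta> \<in> B i" "\<sigma> = insert (north i) (lift i \<beta>)"
  using assms unfolding mem_R_iff by (auto simp: lift_insert image_image)

lemma insert_0_lift_in_R: "i \<in> I \<Longrightarrow> \<beta> \<in> B i \<Longrightarrow> insert 0 (lift i \<beta>) \<in> R"
  unfolding mem_R_iff by (rule bexI[of _ i], rule bexI[of _ \<beta>]) (auto simp: lift_insert)

lemma insert_north_lift_in_R: "i \<in> I \<Longrightarrow> \<beta> \<in> B i \<Longrightarrow> insert (north i) (lift i \<beta>) \<in> R"
  unfolding mem_R_iff by (rule bexI[of _ i], rule bexI[of _ \<beta>]) (auto simp: lift_insert)

lemma downward_closed_L: "downward_closed L"
  unfolding L_def
  by (intro downward_closed_Un downward_closed_cone_complex A_closed)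
     (rule downward_closed_UN, rule downward_closed_cone_complex, rule downward_closed_image, rule B_closed)

lemma downward_closed_R: "downward_closed R"
  unfolding R_def by (rule downward_closed_wedge, rule downward_closed_susp, rule B_closed)

lemma L_cases:
  assumes "\<sigma> \<in> L"
  obtains (base) \<alpha> where "\<alpha> \<in> A" "\<sigma> \<subseteq> insert q \<alpha>"
  | (apex) i \<beta> where "i \<in> I" "\<beta> \<in> B i" "\<sigma> = insert (p i) (sh i ` \<beta>)"
proof -
  consider "\<sigma> \<in> cone_complex q A" | i where "i \<in> I" "\<sigma> \<in> cone_complex (p i) ((`) (sh i) ` B i)"
    using assms unfolding L_def by blast
  then show ?thesis
  proof cases
    case 1
    then show ?thesis using base by (auto elim!: cone_complexE)
  next
    case 2
    then obtain \<beta> \<tau> where \<beta>: "\<beta> \<in> B i" "\<sigma> = sh i ` \<beta> \<union> \<tau>" "\<tau> \<subseteq> {p i}"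
      by (auto elim!: cone_complexE)
    show ?thesis
    proof (cases "\<tau> = {}")
      case True
      then show ?thesis using base[of "sh i ` \<beta>"] sh_in_A[OF 2(1) \<beta>(1)] \<beta>(2) by blast
    next
      case False
      then show ?thesis using apex[OF 2(1) \<beta>(1)] \<beta>(2,3) by blast
    qed
  qed
qed

lemma insert_q_in_L: "\<alpha> \<in> A \<Longrightarrow> insert q \<alpha> \<in> L"
  unfolding L_def using cone_complexI[of \<alpha> A "{q}" q] by auto

lemma insert_p_in_L: "i \<in> I \<Longrightarrow> \<beta> \<in> B i \<Longrightarrow> insert (p i) (sh i ` \<beta>) \<in> L"
  unfolding L_def using cone_complexI[of "sh i ` \<beta>" "(`) (sh i) ` B i" "{p i}" "p i"] by auto

lemma p_notin_sh: "i \<in> I \<Longrightarrow> j \<in> I \<Longrightarrow> p j \<notin> sh i ` \<beta>"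
  using sh_neq_p by (metis imageE)

lemma at_most_one_apex:
  assumes "\<sigma> \<in> L" "a \<in> \<sigma> \<inter> p ` I" "b \<in> \<sigma> \<inter> p ` I"
  shows "a = b"
  using assms(1)
proof (cases rule: L_cases)
  case (base \<alpha>)
  then show ?thesis using assms(2) p_notin_A p_neq_q by blast
next
  case (apex i \<beta>)
  then have "c = p i" if "c \<in> \<sigma> \<inter> p ` I" for c
    using that apex(3) sh_neq_p[OF apex(1)] by auto
  then show ?thesis using assms(2,3) by metis
qed

lemma at_most_one_north:
  assumes "\<sigma> \<in> R" "a \<in> \<sigma> \<inter> north ` I" "b \<in> \<sigma> \<inter> north ` I"
  shows "a = b"
  using assms(1) by (cases rule: R_cases) (use assms(2,3) in \<open>auto simp: wedge_enc_eq_iff\<close>)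

definition vmap :: "nat \<Rightarrow> nat" where
  "vmap w = (if w = 0 then q else
     case prod_decode (w - 1) of (i, v) \<Rightarrow> if v = 1 then p i else sh i (v - 2))"

lemma vmap_0 [simp]: "vmap 0 = q"
  by (simp add: vmap_def)

lemma vmap_wedge_enc [simp]:
  "vmap (wedge_enc i v) = (if v = 0 then q else if v = 1 then p i else sh i (v - 2))"
  by (simp add: vmap_def wedge_enc_def)

lemma vmap_simplex:
  assumes "\<sigma> \<in> R"
  shows "vmap ` \<sigma> \<in> L"
  using assms
proof (cases rule: R_cases)
  case (lower i \<beta>)
  then have "vmap ` \<sigma> \<subseteq> insert q (sh i ` \<beta>)" by auto
  then show ?thesis
    using downward_closedD[OF downward_closed_L insert_q_in_L[OF sh_in_A[OF lower(1,2)]]] by blast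
next
  case (upper i \<beta>)
  then show ?thesis using insert_p_in_L[OF upper(1,2)] by (simp add: image_image)
qed

definition R_vertices :: "nat set" where
  "R_vertices = insert 0 (\<Union>i\<in>I. insert (north i) (lift i (\<Union>(B i))))"

lemma finite_R_vertices: "finite R_vertices"
  unfolding R_vertices_def using finite_I finite_B_vertices by auto

lemma R_subset_vertices: "\<sigma> \<in> R \<Longrightarrow> \<sigma> \<subseteq> R_vertices"
  by (cases rule: R_cases) (auto simp: R_vertices_def)

lemma supp_subset_R_vertices: "z \<in> realization R \<Longrightarrow> supp z \<subseteq> R_vertices"
  using R_subset_vertices by (simp add: mem_realization_iff)

definition uncollapse :: "(nat \<Rightarrow> real) \<Rightarrow> nat \<Rightarrow> real" where
  "uncollapse = realize_map vmap R_vertices"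

lemma continuous_on_uncollapse: "continuous_on S uncollapse"
  unfolding uncollapse_def by (rule continuous_on_realize_map[OF finite_R_vertices])

lemma supp_uncollapse: "z \<in> realization R \<Longrightarrow> supp (uncollapse z) = vmap ` supp z"
  unfolding uncollapse_def
  by (rule supp_realize_map[OF finite_R_vertices supp_subset_R_vertices])

lemma uncollapse_eq_sum:
  "z \<in> realization R \<Longrightarrow> uncollapse z u = (\<Sum>w | w \<in> supp z \<and> vmap w = u. z w)"
  unfolding uncollapse_def
  by (rule realize_map_eq_sum_supp[OF finite_R_vertices supp_subset_R_vertices])

lemma uncollapse_in_realization: "z \<in> realization R \<Longrightarrow> uncollapse z \<in> realization L"
  unfolding uncollapse_def
  by (rule realize_map_in_realization[OF finite_R_vertices supp_subset_R_vertices])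
     (auto simp: mem_realization_iff intro: vmap_simplex)

definition cone_scale :: "real \<Rightarrow> real" where
  "cone_scale s = 2 * min s (1/2) / (1 - min s (1/2))"

text \<open>A point of the cone with apex \<open>p i\<close> and apex weight \<open>s\<close> goes to the \<open>i\<close>-th suspension: the
  wedge point 0 gets weight \<open>1 - 2 s\<close> while \<open>s \<le> 1/2\<close>, \<open>north i\<close> gets \<open>2 s - 1\<close> once \<open>s \<ge> 1/2\<close>,
  and the base weights, of total \<open>1 - s\<close>, are scaled by \<open>cone_scale s\<close> so that all weights sum
  to 1. The cone with apex \<open>q\<close> goes to the wedge point.\<close>

definition collapse :: "(nat \<Rightarrow> real) \<Rightarrow> nat \<Rightarrow> real" where
  "collapse x w = (if w = 0 then 1 - (\<Sum>i\<in>I. min 1 (2 * x (p i))) else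
     case prod_decode (w - 1) of (i, v) \<Rightarrow>
       if i \<notin> I \<or> v = 0 then 0 else if v = 1 then max 0 (2 * x (p i) - 1)
       else cone_scale (x (p i)) * x (sh i (v - 2)))"

lemma collapse_0: "collapse x 0 = 1 - (\<Sum>i\<in>I. min 1 (2 * x (p i)))"
  by (simp add: collapse_def)

lemma collapse_wedge_enc:
  "v \<noteq> 0 \<Longrightarrow> collapse x (wedge_enc i v) = (if i \<notin> I then 0 else if v = 1 then max 0 (2 * x (p i) - 1)
     else cone_scale (x (p i)) * x (sh i (v - 2)))"
  by (simp add: collapse_def wedge_enc_def)

lemma collapse_junk: "collapse x (Suc (prod_encode (i, 0))) = 0"
  by (simp add: collapse_def)

lemma continuous_on_collapse: "continuous_on S collapse"
proof (rule continuous_on_coordinatewise_then_product)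
  fix w
  have coord: "continuous_on S (\<lambda>x. x u)" for u :: nat
    by (rule continuous_on_coordinate)
  have scale: "continuous_on S (\<lambda>x. cone_scale (x u))" for u
    unfolding cone_scale_def by (intro continuous_intros coord) (auto simp: min_def)
  show "continuous_on S (\<lambda>x. collapse x w)"
  proof (cases w rule: wedge_code_cases)
    case base
    show ?thesis unfolding base collapse_0 by (intro continuous_intros coord)
  next
    case (enc i v)
    show ?thesis unfolding enc(2) collapse_wedge_enc[OF enc(1)]
      by (cases "i \<in> I"; cases "v = 1") (simp_all add: continuous_on_const continuous_on_max
          continuous_on_diff continuous_on_mult continuous_on_mult_left coord scale)
  next
    case (junk i)
    show ?thesis unfolding junk collapse_junk by (rule continuous_on_const)
  qed
qed

lemma collapse_base:
  assumes "\<And>i. i \<in> I \<Longrightarrow> x (p i) = 0"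
  shows "collapse x = indicator {0}"
proof
  fix w
  show "collapse x w = indicator {0} w"
    by (cases w rule: wedge_code_cases)
       (simp_all add: collapse_0 collapse_wedge_enc collapse_junk assms cone_scale_def)
qed

lemma indicator_0_in_realization_R: "indicator {0} \<in> realization R"
proof -
  obtain i where "i \<in> I" using I_nonempty by blast
  then have "insert 0 (lift i {}) \<in> R" using empty_in_B by (intro insert_0_lift_in_R)
  then show ?thesis by (simp add: indicator_in_realization)
qed

lemma realization_L_cases:
  assumes x: "x \<in> realization L"
  obtains (base) \<alpha> where "\<And>i. i \<in> I \<Longrightarrow> x (p i) = 0" "\<alpha> \<in> A" "supp x \<subseteq> insert q \<alpha>"
  | (apex) i \<beta> where "i \<in> I" "\<beta> \<in> B i" "supp x = insert (p i) (sh i ` \<beta>)"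
proof -
  have "supp x \<in> L" using x by (simp add: mem_realization_iff)
  then show ?thesis
  proof (cases rule: L_cases)
    case (base \<alpha>)
    have "x (p i) = 0" if "i \<in> I" for i
      using base p_notin_A[OF that] p_neq_q[OF that] by (auto simp: supp_def)
    then show ?thesis using that(1) base by blast
  next
    case (apex i \<beta>)
    then show ?thesis using that(2) by blast
  qed
qed

context
  fixes x :: "nat \<Rightarrow> real" and i :: nat and \<beta> :: "nat set"
  assumes x: "x \<in> realization L" and i: "i \<in> I" and \<beta>: "\<beta> \<in> B i"
    and supp_x: "supp x = insert (p i) (sh i ` \<beta>)"
begin

lemma apex_weight_other: "j \<in> I \<Longrightarrow> j \<noteq> i \<Longrightarrow> x (p j) = 0"
  using supp_x inj_onD[OF inj_p, of j i] i p_notin_sh[OF i] by (auto simp: supp_def)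

lemma collapse_apex_0: "collapse x 0 = 1 - min 1 (2 * x (p i))"
proof -
  have "(\<Sum>j\<in>I. min 1 (2 * x (p j))) = min 1 (2 * x (p i)) + (\<Sum>j\<in>I - {i}. min 1 (2 * x (p j)))"
    by (rule sum.remove[OF finite_I i])
  also have "(\<Sum>j\<in>I - {i}. min 1 (2 * x (p j))) = 0"
    by (rule sum.neutral) (simp add: apex_weight_other)
  finally show ?thesis by (simp add: collapse_0)
qed

lemma collapse_apex_outside:
  assumes w: "w \<notin> insert 0 (insert (north i) (lift i \<beta>))"
  shows "collapse x w = 0"
proof (cases w rule: wedge_code_cases)
  case base
  then show ?thesis using w by simp
next
  case (enc j v)
  consider "j \<notin> I" | "j \<in> I" "j \<noteq> i" | "j = i" "v = 1" | "j = i" "v \<noteq> 1"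
    by blast
  then show ?thesis
  proof cases
    case 1
    then show ?thesis using enc by (simp add: collapse_wedge_enc)
  next
    case 2
    then show ?thesis using enc apex_weight_other by (simp add: collapse_wedge_enc cone_scale_def)
  next
    case 3
    then show ?thesis using enc w by simp
  next
    case 4
    then have "v = (v - 2) + 2" using enc(1) by simp
    then have "v - 2 \<notin> \<beta>" using w enc(2) 4(1) by (metis image_eqI insertCI)
    then have "sh i (v - 2) \<notin> supp x"
      using supp_x inj_sh[OF i] sh_neq_p[OF i i] by (auto simp: inj_def)
    then show ?thesis using enc 4 i by (simp add: collapse_wedge_enc supp_def)
  qed
next
  case (junk j)
  then show ?thesis by (simp add: collapse_junk)
qed

lemma supp_collapse_apex:
  "supp (collapse x) \<subseteq> (if x (p i) \<le> 1/2 then insert 0 (lift i \<beta>) else insert (north i) (lift i \<beta>))"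
proof
  fix w assume "w \<in> supp (collapse x)"
  then have "collapse x w \<noteq> 0" by (simp add: supp_def)
  moreover from this have "w \<in> insert 0 (insert (north i) (lift i \<beta>))"
    using collapse_apex_outside by blast
  moreover have "x (p i) \<le> 1/2 \<Longrightarrow> collapse x (north i) = 0"
    using i by (simp add: collapse_wedge_enc)
  moreover have "\<not> x (p i) \<le> 1/2 \<Longrightarrow> collapse x 0 = 0"
    by (simp add: collapse_apex_0)
  ultimately show "w \<in> (if x (p i) \<le> 1/2 then insert 0 (lift i \<beta>) else insert (north i) (lift i \<beta>))"
    by auto
qed

lemma finite_apex_base: "finite \<beta>"
proof -
  have "finite (sh i ` \<beta>)" using x supp_x by (simp add: mem_realization_iff)
  then show ?thesis using inj_sh[OF i] by (simp add: finite_image_iff inj_on_subset)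
qed

lemma apex_base_mass: "sum x (sh i ` \<beta>) = 1 - x (p i)"
  using x supp_x p_notin_sh[OF i i] finite_apex_base by (simp add: mem_realization_iff)

lemma apex_weight_bounds: "0 < x (p i)" "x (p i) \<le> 1"
proof -
  have nonneg: "\<And>v. 0 \<le> x v" using x by (simp add: mem_realization_iff)
  then show "0 < x (p i)" using supp_x by (auto simp: supp_def less_le)
  show "x (p i) \<le> 1" using apex_base_mass sum_nonneg[of "sh i ` \<beta>" x] nonneg by force
qed

lemma sum_collapse_lift: "sum (collapse x) (lift i \<beta>) = cone_scale (x (p i)) * (1 - x (p i))"
proof -
  have inj_lift: "inj_on (\<lambda>v. wedge_enc i (v + 2)) \<beta>" by (auto simp: inj_on_def wedge_enc_eq_iff)
  have "sum (collapse x) (lift i \<beta>) = (\<Sum>v\<in>\<beta>. collapse x (wedge_enc i (v + 2)))"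
    by (simp only: sum.reindex[OF inj_lift] comp_def)
  also have "\<dots> = (\<Sum>v\<in>\<beta>. cone_scale (x (p i)) * x (sh i v))"
    using i by (intro sum.cong refl) (simp add: collapse_wedge_enc)
  also have "\<dots> = cone_scale (x (p i)) * sum x (sh i ` \<beta>)"
    using inj_sh[OF i] by (simp add: sum_distrib_left sum.reindex inj_on_def)
  finally show ?thesis using apex_base_mass by simp
qed

lemma sum_collapse_apex: "sum (collapse x) (insert 0 (insert (north i) (lift i \<beta>))) = 1"
proof -
  define s where "s = x (p i)"
  have "0 \<notin> insert (north i) (lift i \<beta>)" "north i \<notin> lift i \<beta>" by (auto simp: wedge_enc_eq_iff)
  then have "sum (collapse x) (insert 0 (insert (north i) (lift i \<beta>)))
      = collapse x 0 + collapse x (north i) + sum (collapse x) (lift i \<beta>)"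
    using finite_apex_base by simp
  also have "\<dots> = (1 - min 1 (2 * s)) + max 0 (2 * s - 1) + cone_scale s * (1 - s)"
    unfolding sum_collapse_lift using i by (simp add: collapse_apex_0 collapse_wedge_enc s_def)
  also have "\<dots> = 1"
    using apex_weight_bounds unfolding s_def[symmetric]
    by (cases "s \<le> 1/2") (auto simp: cone_scale_def min_def max_def field_simps)
  finally show ?thesis .
qed

lemma collapse_apex_in_realization: "collapse x \<in> realization R"
proof -
  define D where "D = insert 0 (insert (north i) (lift i \<beta>))"
  have "finite D" using finite_apex_base by (simp add: D_def)
  have supp_D: "supp (collapse x) \<subseteq> D" using supp_collapse_apex by (auto simp: D_def split: if_splits)
  have "sum (collapse x) (supp (collapse x)) = 1"
    using sum_supp_eq[OF \<open>finite D\<close> supp_D] sum_collapse_apex by (simp add: D_def)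
  moreover have "supp (collapse x) \<in> R"
    using supp_collapse_apex downward_closedD[OF downward_closed_R]
      insert_0_lift_in_R[OF i \<beta>] insert_north_lift_in_R[OF i \<beta>]
    by (auto split: if_splits)
  moreover have "0 \<le> collapse x w" for w
  proof (cases "w \<in> D")
    case True
    have "0 \<le> cone_scale (x (p i))" using apex_weight_bounds by (simp add: cone_scale_def min_def)
    then show ?thesis
      using True i x collapse_apex_0
      by (auto simp: D_def collapse_wedge_enc min_def mem_realization_iff)
  next
    case False
    then have "w \<notin> supp (collapse x)" using supp_D by blast
    then show ?thesis by (simp add: supp_def)
  qed
  ultimately show ?thesis using finite_subset[OF supp_D \<open>finite D\<close>] by (auto simp: mem_realization_iff)
qed

end

lemma collapse_in_realization: "x \<in> realization L \<Longrightarrow> collapse x \<in> realization R"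
  by (cases rule: realization_L_cases)
     (auto simp: collapse_base indicator_0_in_realization_R collapse_apex_in_realization)

lemma joint_supp_stretch_uncollapse_collapse:
  assumes x: "x \<in> realization L"
  shows "supp (radial_stretch (p ` I) x) \<union> supp (uncollapse (collapse x)) \<in> L"
proof -
  let ?y = "radial_stretch (p ` I) x"
  have y: "supp ?y \<subseteq> supp x"
    using x by (intro supp_radial_stretch_subset) (simp add: mem_realization_iff)
  have gf: "supp (uncollapse (collapse x)) = vmap ` supp (collapse x)"
    by (rule supp_uncollapse[OF collapse_in_realization[OF x]])
  from x show ?thesis
  proof (cases rule: realization_L_cases)
    case (base \<alpha>)
    then have "supp ?y \<union> supp (uncollapse (collapse x)) \<subseteq> insert q \<alpha>"
      using y gf collapse_base by auto
    then show ?thesis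
      using downward_closedD[OF downward_closed_L insert_q_in_L[OF base(2)]] by blast
  next
    case (apex i \<beta>)
    have gf_apex: "supp (uncollapse (collapse x))
        \<subseteq> (if x (p i) \<le> 1/2 then insert q (sh i ` \<beta>) else insert (p i) (sh i ` \<beta>))"
      using supp_collapse_apex[OF x apex] gf by (auto simp: image_image split: if_splits)
    show ?thesis
    proof (cases "x (p i) \<le> 1/2")
      case True
      have "?y (p i) = 0" using apex(1) True by (intro radial_stretch_eq_0) auto
      then have "supp ?y \<union> supp (uncollapse (collapse x)) \<subseteq> insert q (sh i ` \<beta>)"
        using y apex(3) gf_apex True by (auto simp: supp_def)
      then show ?thesis
        using downward_closedD[OF downward_closed_L insert_q_in_L[OF sh_in_A[OF apex(1,2)]]] by blast
    next
      case False
      then have "supp ?y \<union> supp (uncollapse (collapse x)) \<subseteq> supp x"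
        using y apex(3) gf_apex by auto
      then show ?thesis
        using downward_closedD[OF downward_closed_L] x by (auto simp: mem_realization_iff)
    qed
  qed
qed

lemma collapse_uncollapse_lower:
  assumes z: "z \<in> realization R" and i: "i \<in> I" and supp_z: "supp z \<subseteq> insert 0 (lift i \<beta>)"
  shows "collapse (uncollapse z) = indicator {0}"
proof (rule collapse_base)
  fix j assume "j \<in> I"
  have "supp (uncollapse z) \<subseteq> insert q (sh i ` \<beta>)"
    using supp_uncollapse[OF z] supp_z by (auto simp: image_image)
  then have "p j \<notin> supp (uncollapse z)" using \<open>j \<in> I\<close> p_neq_q p_notin_sh[OF i] by blast
  then show "uncollapse z (p j) = 0" by (simp add: supp_def)
qed

lemma uncollapse_upper:
  assumes z: "z \<in> realization R" and i: "i \<in> I"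
    and supp_z: "supp z = insert (north i) (lift i \<beta>)"
  shows "supp (uncollapse z) = insert (p i) (sh i ` \<beta>)" and "uncollapse z (p i) = z (north i)"
proof -
  show "supp (uncollapse z) = insert (p i) (sh i ` \<beta>)"
    using supp_uncollapse[OF z] supp_z by (simp add: image_image)
  have "{w. w \<in> supp z \<and> vmap w = p i} = {north i}"
    using supp_z sh_neq_p[OF i i] by auto
  then show "uncollapse z (p i) = z (north i)" by (simp add: uncollapse_eq_sum[OF z])
qed

lemma joint_supp_stretch_collapse_uncollapse:
  assumes z: "z \<in> realization R"
  shows "supp (radial_stretch (north ` I) z) \<union> supp (collapse (uncollapse z)) \<in> R"
proof -
  let ?y = "radial_stretch (north ` I) z"
  have nonneg: "\<And>v. 0 \<le> z v" and "supp z \<in> R" using z by (auto simp: mem_realization_iff)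
  have y: "supp ?y \<subseteq> supp z" using nonneg by (rule supp_radial_stretch_subset)
  from \<open>supp z \<in> R\<close> show ?thesis
  proof (cases rule: R_cases)
    case (lower i \<beta>)
    then have supp_z: "supp z \<subseteq> insert 0 (lift i \<beta>)" by auto
    have "z a = 0" if "a \<in> north ` I" for a
      using that supp_z by (auto simp: supp_def wedge_enc_eq_iff)
    then have "?y = z" by (rule radial_stretch_eq_self)
    then have "supp ?y \<union> supp (collapse (uncollapse z)) \<subseteq> insert 0 (lift i \<beta>)"
      using supp_z collapse_uncollapse_lower[OF z lower(1) supp_z] by simp
    then show ?thesis
      using downward_closedD[OF downward_closed_R insert_0_lift_in_R[OF lower(1,2)]] by blast
  next
    case (upper i \<beta>)
    have fg: "supp (collapse (uncollapse z))
        \<subseteq> (if z (north i) \<le> 1/2 then insert 0 (lift i \<beta>) else insert (north i) (lift i \<beta>))"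
      using supp_collapse_apex[OF uncollapse_in_realization[OF z] upper(1,2)]
        uncollapse_upper[OF z upper(1,3)] by simp
    show ?thesis
    proof (cases "z (north i) \<le> 1/2")
      case True
      have "?y (north i) = 0" using upper(1) True by (intro radial_stretch_eq_0) auto
      then have "supp ?y \<union> supp (collapse (uncollapse z)) \<subseteq> insert 0 (lift i \<beta>)"
        using y upper(3) fg True by (auto simp: supp_def)
      then show ?thesis
        using downward_closedD[OF downward_closed_R insert_0_lift_in_R[OF upper(1,2)]] by blast
    next
      case False
      then have "supp ?y \<union> supp (collapse (uncollapse z)) \<subseteq> supp z"
        using y upper(3) fg by auto
      then show ?thesis using downward_closedD[OF downward_closed_R \<open>supp z \<in> R\<close>] by blast
    qed
  qed
qed

lemma uncollapse_collapse_homotopic_id: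
  "homotopic_with_canon (\<lambda>f. True) (realization L) (realization L) (uncollapse \<circ> collapse) id"
proof (rule homotopic_id_via_radial_stretch[OF downward_closed_L _ at_most_one_apex])
  show "finite (p ` I)" using finite_I by simp
  show "continuous_on (realization L) (uncollapse \<circ> collapse)"
    by (rule continuous_on_compose[OF continuous_on_collapse continuous_on_uncollapse])
  show "(uncollapse \<circ> collapse) ` realization L \<subseteq> realization L"
    using collapse_in_realization uncollapse_in_realization by auto
next
  fix x assume "x \<in> realization L"
  then show "supp (radial_stretch (p ` I) x) \<union> supp ((uncollapse \<circ> collapse) x) \<in> L"
    unfolding comp_apply by (rule joint_supp_stretch_uncollapse_collapse)
qed

lemma collapse_uncollapse_homotopic_id:
  "homotopic_with_canon (\<lambda>f. True) (realization R) (realization R) (collapse \<circ> uncollapse) id"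
proof (rule homotopic_id_via_radial_stretch[OF downward_closed_R _ at_most_one_north])
  show "finite (north ` I)" using finite_I by simp
  show "continuous_on (realization R) (collapse \<circ> uncollapse)"
    by (rule continuous_on_compose[OF continuous_on_uncollapse continuous_on_collapse])
  show "(collapse \<circ> uncollapse) ` realization R \<subseteq> realization R"
    using collapse_in_realization uncollapse_in_realization by auto
next
  fix z assume "z \<in> realization R"
  then show "supp (radial_stretch (north ` I) z) \<union> supp ((collapse \<circ> uncollapse) z) \<in> R"
    unfolding comp_apply by (rule joint_supp_stretch_collapse_uncollapse)
qed

theorem homotopy_equivalent_L_R:
  "top_of_set (realization L) homotopy_equivalent_space top_of_set (realization R)"
  unfolding homotopy_equivalent_space_def
proof (intro exI conjI)
  show "continuous_map (top_of_set (realization L)) (top_of_set (realization R)) collapse"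
    using continuous_on_collapse collapse_in_realization by auto
  show "continuous_map (top_of_set (realization R)) (top_of_set (realization L)) uncollapse"
    using continuous_on_uncollapse uncollapse_in_realization by auto
qed (fact uncollapse_collapse_homotopic_id collapse_uncollapse_homotopic_id)+

end

section \<open>The complexes \<open>L\<^sub>n\<^sup>k\<close>\<close>

lemma downward_closed_indep_L: "downward_closed (indep_L k m)"
  unfolding downward_closed_def indep_L_def by blast

lemma finite_indep_L_vertices: "finite (\<Union>(indep_L k m))"
  by (rule finite_subset[of _ "{1..nat m}"]) (auto simp: indep_L_def)

lemma image_add_in_indep_L_iff:
  assumes "0 \<notin> \<beta>"
  shows "(\<lambda>v. v + c) ` \<beta> \<in> indep_L k (int n) \<longleftrightarrow> \<beta> \<in> indep_L k (int n - int c)"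
proof -
  have "(\<lambda>v. v + c) ` \<beta> \<subseteq> {1..nat (int n)} \<longleftrightarrow> \<beta> \<subseteq> {1..nat (int n - int c)}"
    using assms by (auto simp: subset_iff Suc_le_eq)
  moreover have "(\<forall>a\<in>(\<lambda>v. v + c) ` \<beta>. \<forall>b\<in>(\<lambda>v. v + c) ` \<beta>. a < b \<longrightarrow> k \<le> b - a)
      \<longleftrightarrow> (\<forall>a\<in>\<beta>. \<forall>b\<in>\<beta>. a < b \<longrightarrow> k \<le> b - a)"
    by auto
  ultimately show ?thesis by (simp add: indep_L_def)
qed

lemma indep_L_unshift:
  assumes \<rho>: "\<rho> \<in> indep_L k (int n)" and above: "\<And>u. u \<in> \<rho> \<Longrightarrow> c < u"
  obtains \<beta> where "(\<lambda>v. v + c) ` \<beta> = \<rho>" "\<beta> \<in> indep_L k (int n - int c)"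
proof -
  define \<beta> where "\<beta> = (\<lambda>u. u - c) ` \<rho>"
  have "(\<lambda>v. v + c) ` \<beta> = (\<lambda>u. u) ` \<rho>"
    unfolding \<beta>_def image_image by (rule image_cong[OF refl]) (use above in fastforce)
  then have "(\<lambda>v. v + c) ` \<beta> = \<rho>" by simp
  moreover have "0 \<notin> \<beta>" using above by (fastforce simp: \<beta>_def)
  ultimately show ?thesis using that \<rho> image_add_in_indep_L_iff[of \<beta> c k n] by simp
qed

lemma insert_in_indep_L:
  assumes "\<sigma> \<in> indep_L k (int n)" "1 \<le> j" "j \<le> n" "\<And>v. v \<in> \<sigma> \<Longrightarrow> j + k \<le> v"
  shows "insert j \<sigma> \<in> indep_L k (int n)"
  using assms by (force simp: indep_L_def)

lemma indep_L_far_from_low_vertex: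
  assumes "\<sigma> \<in> indep_L k m" "j \<in> \<sigma>" "j \<le> k" "u \<in> \<sigma>" "u \<noteq> j"
  shows "j + k \<le> u"
proof (cases "u < j")
  case True
  then have "k \<le> j - u" "1 \<le> u" using assms by (auto simp: indep_L_def)
  then show ?thesis using True \<open>j \<le> k\<close> by linarith
next
  case False
  then have "j < u" using assms(5) by simp
  moreover have "k \<le> u - j" using \<open>j < u\<close> assms by (auto simp: indep_L_def)
  ultimately show ?thesis by arith
qed

definition indep_tail :: "nat \<Rightarrow> nat \<Rightarrow> nat set set" where
  "indep_tail k n = {\<sigma> \<in> indep_L k (int n). \<forall>v\<in>\<sigma>. k < v}"

lemma shift_in_indep_tail:
  assumes "\<beta> \<in> indep_L k (int n - int k - int i)"
  shows "(\<lambda>v. v + (i + k)) ` \<beta> \<in> indep_tail k n"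
proof -
  have pos: "1 \<le> v" if "v \<in> \<beta>" for v using assms that by (auto simp: indep_L_def)
  then have "(\<lambda>v. v + (i + k)) ` \<beta> \<in> indep_L k (int n)"
    using assms image_add_in_indep_L_iff[of \<beta> "i + k"] by (force simp: algebra_simps)
  then show ?thesis using pos by (force simp: indep_tail_def)
qed

lemma cones_subset_indep_L:
  assumes "0 < n"
  shows "cone_complex 1 (indep_tail k n) \<union> (\<Union>i\<in>{1..<min k n}. cone_complex (i + 1)
      ((`) (\<lambda>v. v + (i + k)) ` indep_L k (int n - int k - int i))) \<subseteq> indep_L k (int n)"
proof (intro Un_least UN_least subsetI)
  fix \<sigma> assume "\<sigma> \<in> cone_complex 1 (indep_tail k n)"
  then obtain \<alpha> \<tau> where \<sigma>: "\<sigma> = \<alpha> \<union> \<tau>" "\<alpha> \<in> indep_tail k n" "\<tau> \<subseteq> {1}"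
    by (auto elim: cone_complexE)
  have "insert 1 \<alpha> \<in> indep_L k (int n)"
    using \<sigma>(2) assms by (intro insert_in_indep_L) (auto simp: indep_tail_def)
  then show "\<sigma> \<in> indep_L k (int n)"
    using downward_closedD[OF downward_closed_indep_L] \<sigma>(1,3) by blast
next
  fix i \<sigma> assume i: "i \<in> {1..<min k n}"
    and "\<sigma> \<in> cone_complex (i + 1) ((`) (\<lambda>v. v + (i + k)) ` indep_L k (int n - int k - int i))"
  then obtain \<beta> \<tau> where \<sigma>: "\<sigma> = (\<lambda>v. v + (i + k)) ` \<beta> \<union> \<tau>"
    "\<beta> \<in> indep_L k (int n - int k - int i)" "\<tau> \<subseteq> {i + 1}"
    by (auto elim: cone_complexE)
  have "(\<lambda>v. v + (i + k)) ` \<beta> \<in> indep_tail k n" by (rule shift_in_indep_tail[OF \<sigma>(2)])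
  moreover have "\<beta> \<subseteq> {1..}" using \<sigma>(2) by (auto simp: indep_L_def)
  ultimately have "insert (i + 1) ((\<lambda>v. v + (i + k)) ` \<beta>) \<in> indep_L k (int n)"
    using i by (intro insert_in_indep_L) (auto simp: indep_tail_def)
  then show "\<sigma> \<in> indep_L k (int n)"
    using downward_closedD[OF downward_closed_indep_L] \<sigma>(1,3) by blast
qed

lemma indep_L_subset_cones:
  assumes \<sigma>: "\<sigma> \<in> indep_L k (int n)"
  shows "\<sigma> \<in> cone_complex 1 (indep_tail k n) \<union> (\<Union>i\<in>{1..<min k n}. cone_complex (i + 1)
      ((`) (\<lambda>v. v + (i + k)) ` indep_L k (int n - int k - int i)))"
proof (cases "\<forall>v\<in>\<sigma>. k < v")
  case True
  then have "\<sigma> \<union> {} \<in> cone_complex 1 (indep_tail k n)"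
    using \<sigma> by (intro cone_complexI) (auto simp: indep_tail_def)
  then show ?thesis by simp
next
  case False
  then obtain j where j: "j \<in> \<sigma>" "j \<le> k" by (auto simp: not_less)
  have "1 \<le> j" "j \<le> n" using j(1) \<sigma> by (auto simp: indep_L_def)
  define \<rho> where "\<rho> = \<sigma> - {j}"
  have \<sigma>_eq: "\<sigma> = \<rho> \<union> {j}" using j(1) by (auto simp: \<rho>_def)
  have \<rho>: "\<rho> \<in> indep_L k (int n)" by (rule downward_closedD[OF downward_closed_indep_L \<sigma>]) (auto simp: \<rho>_def)
  have far: "j + k \<le> u" if "u \<in> \<rho>" for u
    using indep_L_far_from_low_vertex[OF \<sigma> j] that by (auto simp: \<rho>_def)
  show ?thesis
  proof (cases "j = 1")
    case True
    then have "\<rho> \<in> indep_tail k n" using \<rho> far by (fastforce simp: indep_tail_def)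
    then show ?thesis using \<sigma>_eq True cone_complexI[of \<rho> _ "{1}" 1] by auto
  next
    case False
    define i where "i = j - 1"
    have i: "i \<in> {1..<min k n}" "j = i + 1"
      using False \<open>1 \<le> j\<close> \<open>j \<le> n\<close> j(2) by (auto simp: i_def)
    have "i + k < u" if "u \<in> \<rho>" for u using far[OF that] i(2) by simp
    then obtain \<beta> where \<beta>: "(\<lambda>v. v + (i + k)) ` \<beta> = \<rho>" "\<beta> \<in> indep_L k (int n - int (i + k))"
      by (rule indep_L_unshift[OF \<rho>])
    then have "\<beta> \<in> indep_L k (int n - int k - int i)" by (simp add: algebra_simps)
    then have "(\<lambda>v. v + (i + k)) ` \<beta> \<union> {i + 1}
        \<in> cone_complex (i + 1) ((`) (\<lambda>v. v + (i + k)) ` indep_L k (int n - int k - int i))"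
      by (intro cone_complexI) auto
    then show ?thesis using i \<sigma>_eq \<beta>(1) by blast
  qed
qed

theorem indep_L_decomposition:
  assumes "0 < n"
  shows "indep_L k (int n) = cone_complex 1 (indep_tail k n) \<union> (\<Union>i\<in>{1..<min k n}.
      cone_complex (i + 1) ((`) (\<lambda>v. v + (i + k)) ` indep_L k (int n - int k - int i)))"
  using cones_subset_indep_L[OF assms] indep_L_subset_cones by blast

lemma coned_subcomplexes_indep_L:
  assumes "2 \<le> k" "1 < n"
  shows "coned_subcomplexes {1..<min k n} (indep_tail k n) (\<lambda>i. indep_L k (int n - int k - int i))
    1 (\<lambda>i. i + 1) (\<lambda>i v. v + (i + k))"
proof
  show "{1..<min k n} \<noteq> {}" using assms by auto
  show "downward_closed (indep_tail k n)"
    unfolding downward_closed_def indep_tail_def indep_L_def by blast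
  show "i + 1 \<notin> \<Union>(indep_tail k n)" if "i \<in> {1..<min k n}" for i
  proof
    assume "i + 1 \<in> \<Union>(indep_tail k n)"
    then have "k < i + 1" by (auto simp: indep_tail_def)
    then show False using that by simp
  qed
qed (auto simp: downward_closed_indep_L finite_indep_L_vertices shift_in_indep_tail inj_on_def,
     auto simp: indep_L_def)

theorem corollary3p8:
  fixes k n :: nat
  assumes "k \<ge> 2" and "n > 1"
  shows "(top_of_set (realization (indep_L k (int n))))
           homotopy_equivalent_space
         (top_of_set (realization (wedge {1..<min k n}
              (\<lambda>i. susp (indep_L k (int n - int k - int i))))))"
proof -
  interpret coned_subcomplexes "{1..<min k n}" "indep_tail k n"
    "\<lambda>i. indep_L k (int n - int k - int i)" 1 "\<lambda>i. i + 1" "\<lambda>i v. v + (i + k)"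
    using assms by (rule coned_subcomplexes_indep_L)
  have "L = indep_L k (int n)"
    unfolding L_def using indep_L_decomposition[of n k] assms by simp
  then show ?thesis using homotopy_equivalent_L_R unfolding R_def by simp
qed

end
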